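(* Suppose the payoff $\tilde v$ follows $N(\mu_v,\sigma_v^2)$ with $\sigma_v>0$ and the informed trader observes a signal $\tilde s=\tilde v+\tilde\epsilon$, where $\tilde\epsilon\sim N(0,\sigma_\epsilon^2)$ is independent of $\tilde v$ and $\sigma_\epsilon^2$ is chosen by the trader. Let $\lambda,\sigma_Z,T>0$. Let $\xi:=\sigma_v^2/(\sigma_v^2+\sigma_\epsilon^2)\in[0,1]$ and let $\xi^*$ be the unique maximizer over $\xi\in[0,1]$ of $$\sigma_v\sigma_Z\sqrt T\sqrt\xi-\frac\lambda2\log\Big(\frac1{1-\xi}\Big).$$ Then the optimal conditional precision of the signal (maximizing the trader's value $J$ defined in the context) is $$\frac1{\sigma_\epsilon^2}=\frac1{\sigma_v^2}\,\frac{\xi^*}{1-\xi^*},$$ and both this optimal precision and $\xi^*$ decrease with $\frac{\lambda}{\sigma_v\sigma_Z\sqrt T}$.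
   Context: The informed trader's value of a signal is $J=\frac12\{\mathbb E[\mathbb E[\tilde v|\tilde s]^2]+\sigma_Z^2T-W_2^2(F_s,G)\}-\lambda I(\tilde s;\tilde v)$, where $F_s$ is the distribution of $\mathbb E[\tilde v|\tilde s]$, $G$ is the CDF of $N(0,\sigma_Z^2T)$, $W_2$ is the Wasserstein-2 distance, $I(\tilde s;\tilde v)$ is the mutual information and $\lambda>0$ the marginal cost of information. For the signal $\tilde s=\tilde v+\tilde\epsilon$, $J$ equals the function of $\xi$ displayed in the claim. *)

theory Defs
  imports Complex_Main
begin

text \<open>Signal informativeness xi = sv^2/(sv^2 + se^2), written in terms of the
  conditional precision p = 1/se^2 (p = 0 is the uninformative signal, se^2 = infinity).\<close>
definition xi_of :: "real \<Rightarrow> real \<Rightarrow> real" where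
  "xi_of sv p = sv\<^sup>2 * p / (sv\<^sup>2 * p + 1)"

definition value_xi :: "real \<Rightarrow> real \<Rightarrow> real \<Rightarrow> real \<Rightarrow> real \<Rightarrow> real" where
  "value_xi sv sZ T lam xi = sv * sZ * sqrt T * sqrt xi - lam / 2 * ln (1 / (1 - xi))"

definition J_prec :: "real \<Rightarrow> real \<Rightarrow> real \<Rightarrow> real \<Rightarrow> real \<Rightarrow> real" where
  "J_prec sv sZ T lam p = value_xi sv sZ T lam (xi_of sv p)"

text \<open>xi^*: the unique maximizer of the objective over xi in [0,1)
  (at xi = 1 the objective is -infinity, so it is excluded).\<close>
definition opt_xi :: "real \<Rightarrow> real \<Rightarrow> real \<Rightarrow> real \<Rightarrow> real" where
  "opt_xi sv sZ T lam = (THE xi. xi \<in> {0..<1} \<and>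
      (\<forall>eta\<in>{0..<1}. value_xi sv sZ T lam eta \<le> value_xi sv sZ T lam xi))"

definition opt_prec :: "real \<Rightarrow> real \<Rightarrow> real \<Rightarrow> real \<Rightarrow> real" where
  "opt_prec sv sZ T lam = 1 / sv\<^sup>2 * (opt_xi sv sZ T lam / (1 - opt_xi sv sZ T lam))"

definition kappa :: "real \<Rightarrow> real \<Rightarrow> real \<Rightarrow> real \<Rightarrow> real" where
  "kappa sv sZ T lam = lam / (sv * sZ * sqrt T)"

end

theory Submission
  imports Defs
begin

text \<open>Substituting \<open>\<xi> = y\<^sup>2\<close> and writing \<open>a = \<sigma>\<^sub>v \<sigma>\<^sub>Z \<surd>T\<close>, the objective becomes
  \<open>a y + (\<lambda>/2) ln (1 - y\<^sup>2)\<close>, which is strictly concave on \<open>(-1,1)\<close>. Its stationary point solves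
  \<open>y\<^sup>2 + k y = 1\<close> with \<open>k = \<lambda>/a\<close>, and the tangent-line inequality \<open>ln t < t - 1\<close>, applied to the
  factors \<open>1 - y\<close> and \<open>1 + y\<close>, shows that it is the unique maximiser. The positive root of
  \<open>y\<^sup>2 + k y = 1\<close> strictly decreases in \<open>k\<close>. Finally \<open>p \<mapsto> \<xi>\<close> is a bijection from \<open>[0,\<infinity>)\<close> onto
  \<open>[0,1)\<close> with the increasing inverse \<open>\<xi> \<mapsto> \<xi> / (\<sigma>\<^sub>v\<^sup>2 (1 - \<xi>))\<close>, so the optimal precision is the
  image of \<open>\<xi>\<^sup>*\<close> and inherits its monotonicity.\<close>

definition is_strict_max_on :: "('a \<Rightarrow> 'b::linorder) \<Rightarrow> 'a set \<Rightarrow> 'a \<Rightarrow> bool" where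
  "is_strict_max_on f S x \<longleftrightarrow> x \<in> S \<and> (\<forall>y\<in>S. y \<noteq> x \<longrightarrow> f y < f x)"

lemma is_strict_max_on_maximizer_iff:
  assumes "is_strict_max_on f S x"
  shows "z \<in> S \<and> (\<forall>y\<in>S. f y \<le> f z) \<longleftrightarrow> z = x"
proof
  assume z: "z \<in> S \<and> (\<forall>y\<in>S. f y \<le> f z)"
  show "z = x"
  proof (rule ccontr)
    assume "z \<noteq> x"
    then have "f z < f x"
      using assms z unfolding is_strict_max_on_def by blast
    moreover have "f x \<le> f z"
      using assms z unfolding is_strict_max_on_def by blast
    ultimately show False
      by simp
  qed
next
  assume "z = x"
  then show "z \<in> S \<and> (\<forall>y\<in>S. f y \<le> f z)"
    using assms unfolding is_strict_max_on_def by (auto simp: le_less)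
qed

lemma is_strict_max_on_maximizers:
  assumes "is_strict_max_on f S x"
  shows "{z. z \<in> S \<and> (\<forall>y\<in>S. f y \<le> f z)} = {x}"
  using is_strict_max_on_maximizer_iff[OF assms] by blast

lemma is_strict_max_on_ex1:
  assumes "is_strict_max_on f S x"
  shows "\<exists>!z. z \<in> S \<and> (\<forall>y\<in>S. f y \<le> f z)"
  using is_strict_max_on_maximizer_iff[OF assms] by simp

lemma is_strict_max_on_The:
  assumes "is_strict_max_on f S x"
  shows "(THE z. z \<in> S \<and> (\<forall>y\<in>S. f y \<le> f z)) = x"
  using is_strict_max_on_maximizer_iff[OF assms] by simp

lemma is_strict_max_on_restrict:
  assumes "is_strict_max_on f S x" "x \<in> A" "A \<subseteq> S" "\<And>y. y \<in> A \<Longrightarrow> g y = f y"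
  shows "is_strict_max_on g A x"
  using assms unfolding is_strict_max_on_def by auto

lemma is_strict_max_on_bij_betw:
  assumes "bij_betw g A S" "p \<in> A"
  shows "is_strict_max_on (\<lambda>q. f (g q)) A p \<longleftrightarrow> is_strict_max_on f S (g p)"
  using assms unfolding is_strict_max_on_def bij_betw_def inj_on_def by auto

text \<open>The positive root \<open>(\<surd>(k\<^sup>2 + 4) - k) / 2\<close> of \<open>y\<^sup>2 + k y = 1\<close>.\<close>
definition pos_root :: "real \<Rightarrow> real" where
  "pos_root k = 2 / (k + sqrt (k\<^sup>2 + 4))"

lemma abs_less_sqrt_sq_add_four: "\<bar>k\<bar> < sqrt (k\<^sup>2 + 4)"
  by (rule real_less_rsqrt) simp

lemma pos_root_pos: "0 < pos_root k"
  using abs_less_sqrt_sq_add_four[of k] unfolding pos_root_def by simp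

lemma pos_root_less_one:
  assumes "0 < k"
  shows "pos_root k < 1"
proof -
  have "2 < sqrt (k\<^sup>2 + 4)"
    using assms by (simp add: real_less_rsqrt)
  then show ?thesis
    using assms unfolding pos_root_def by simp
qed

lemma pos_root_eq: "(pos_root k)\<^sup>2 + k * pos_root k = 1"
proof -
  have "0 < k + sqrt (k\<^sup>2 + 4)"
    using abs_less_sqrt_sq_add_four[of k] by linarith
  then have root: "pos_root k = (sqrt (k\<^sup>2 + 4) - k) / 2"
    unfolding pos_root_def by (simp add: field_simps power2_eq_square)
  have "(pos_root k)\<^sup>2 + k * pos_root k = ((sqrt (k\<^sup>2 + 4))\<^sup>2 - k\<^sup>2) / 4"
    unfolding root by (simp add: power2_eq_square algebra_simps add_divide_distrib diff_divide_distrib)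
  then show ?thesis
    by simp
qed

lemma pos_root_strict_antimono:
  assumes "0 \<le> k" "k < k'"
  shows "pos_root k' < pos_root k"
proof -
  have "sqrt (k\<^sup>2 + 4) \<le> sqrt (k'\<^sup>2 + 4)"
    using assms by (simp add: power_mono)
  then have "k + sqrt (k\<^sup>2 + 4) < k' + sqrt (k'\<^sup>2 + 4)"
    using assms(2) by linarith
  moreover have "0 < k + sqrt (k\<^sup>2 + 4)"
    using abs_less_sqrt_sq_add_four[of k] by linarith
  ultimately show ?thesis
    unfolding pos_root_def by (intro divide_strict_left_mono) simp_all
qed

lemma log_objective_strict_max:
  fixes a lam :: real
  assumes "0 < a" "0 < lam"
  shows "is_strict_max_on (\<lambda>y. a * y + lam / 2 * ln (1 - y\<^sup>2)) {-1<..<1} (pos_root (lam / a))"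
proof -
  define r where "r = pos_root (lam / a)"
  have r: "0 < r" "r < 1"
    unfolding r_def using assms by (simp_all add: pos_root_pos pos_root_less_one)
  then have "r\<^sup>2 < 1"
    by (simp add: power_less_one_iff)
  have lam_r: "lam * r = a * (1 - r\<^sup>2)"
    using pos_root_eq[of "lam / a"] assms unfolding r_def[symmetric] by (simp add: field_simps)
  have "a * y + lam / 2 * ln (1 - y\<^sup>2) < a * r + lam / 2 * ln (1 - r\<^sup>2)"
    if y: "-1 < y" "y < 1" "y \<noteq> r" for y
  proof -
    have ln_split: "ln (1 - t\<^sup>2) = ln (1 - t) + ln (1 + t)" if "-1 < t" "t < 1" for t :: real
    proof -
      have "1 - t\<^sup>2 = (1 - t) * (1 + t)"
        by (simp add: power2_eq_square algebra_simps)
      then show ?thesis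
        using that by (simp add: ln_mult)
    qed
    have "ln (1 - y) - ln (1 - r) < (r - y) / (1 - r)"
      using ln_diff_less[of "1 - y" "1 - r"] y r by simp
    moreover have "ln (1 + y) - ln (1 + r) < (y - r) / (1 + r)"
      using ln_diff_less[of "1 + y" "1 + r"] y r by simp
    moreover have "(r - y) / (1 - r) + (y - r) / (1 + r) = 2 * ((r - y) * r / (1 - r\<^sup>2))"
      using r by (simp add: field_simps power2_eq_square)
    ultimately have "ln (1 - y\<^sup>2) - ln (1 - r\<^sup>2) < 2 * ((r - y) * r / (1 - r\<^sup>2))"
      using ln_split[of y] ln_split[of r] y r by linarith
    then have "lam / 2 * (ln (1 - y\<^sup>2) - ln (1 - r\<^sup>2)) < lam / 2 * (2 * ((r - y) * r / (1 - r\<^sup>2)))"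
      using assms(2) by (intro mult_strict_left_mono) simp_all
    also have "\<dots> = lam * ((r - y) * r / (1 - r\<^sup>2))"
      by simp
    also have "\<dots> = (r - y) * (lam * r) / (1 - r\<^sup>2)"
      by (simp add: mult_ac)
    also have "\<dots> = a * (r - y)"
      using lam_r \<open>r\<^sup>2 < 1\<close> by simp
    finally show ?thesis
      by (simp add: algebra_simps)
  qed
  then show ?thesis
    unfolding is_strict_max_on_def r_def[symmetric] using r by simp
qed

lemma value_xi_sq:
  assumes "0 \<le> y" "y < 1"
  shows "value_xi sv sZ T lam (y\<^sup>2) = sv * sZ * sqrt T * y + lam / 2 * ln (1 - y\<^sup>2)"
proof -
  have "0 < 1 - y\<^sup>2"
    using assms by (simp add: power_less_one_iff)
  then show ?thesis
    using assms unfolding value_xi_def by (simp add: ln_div)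
qed

lemma bij_betw_square_unit_interval: "bij_betw (\<lambda>y::real. y\<^sup>2) {0..<1} {0..<1}"
  by (rule bij_betw_byWitness[where f' = sqrt]) (auto simp: power_less_one_iff)

lemma value_xi_strict_max:
  fixes sv sZ T lam :: real
  assumes "0 < sv" "0 < sZ" "0 < T" "0 < lam"
  shows "is_strict_max_on (value_xi sv sZ T lam) {0..<1} ((pos_root (kappa sv sZ T lam))\<^sup>2)"
proof -
  define a where "a = sv * sZ * sqrt T"
  have "0 < a"
    unfolding a_def using assms by simp
  have kappa_eq: "kappa sv sZ T lam = lam / a"
    unfolding kappa_def a_def ..
  have root: "pos_root (lam / a) \<in> {0..<1}"
    using \<open>0 < a\<close> assms(4) pos_root_less_one pos_root_pos[THEN less_imp_le] by simp
  then have "is_strict_max_on (\<lambda>y. value_xi sv sZ T lam (y\<^sup>2)) {0..<1} (pos_root (lam / a))"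
    using log_objective_strict_max[OF \<open>0 < a\<close> assms(4)]
    by (auto intro: is_strict_max_on_restrict simp: value_xi_sq a_def)
  then show ?thesis
    unfolding kappa_eq
    using is_strict_max_on_bij_betw[OF bij_betw_square_unit_interval root, where f = "value_xi sv sZ T lam"]
    by simp
qed

lemma opt_xi_eq:
  assumes "0 < sv" "0 < sZ" "0 < T" "0 < lam"
  shows "opt_xi sv sZ T lam = (pos_root (kappa sv sZ T lam))\<^sup>2"
  unfolding opt_xi_def by (rule is_strict_max_on_The[OF value_xi_strict_max[OF assms]])

lemma opt_xi_strict_max:
  assumes "0 < sv" "0 < sZ" "0 < T" "0 < lam"
  shows "is_strict_max_on (value_xi sv sZ T lam) {0..<1} (opt_xi sv sZ T lam)"
  using value_xi_strict_max[OF assms] opt_xi_eq[OF assms] by simp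

lemma opt_xi_strict_antimono:
  assumes "0 < sv" "0 < sZ" "0 < T" "0 < lam" "0 < sv'" "0 < sZ'" "0 < T'" "0 < lam'"
    and "kappa sv sZ T lam < kappa sv' sZ' T' lam'"
  shows "opt_xi sv' sZ' T' lam' < opt_xi sv sZ T lam"
proof -
  have "0 < kappa sv sZ T lam"
    unfolding kappa_def using assms(1-4) by simp
  then have "pos_root (kappa sv' sZ' T' lam') < pos_root (kappa sv sZ T lam)"
    using pos_root_strict_antimono assms(9) by simp
  then show ?thesis
    using pos_root_pos[of "kappa sv' sZ' T' lam'"]
    by (simp add: opt_xi_eq assms power_strict_mono)
qed

lemma xi_of_prec:
  assumes "0 < sv" "x < 1"
  shows "xi_of sv (1 / sv\<^sup>2 * (x / (1 - x))) = x"
  using assms unfolding xi_of_def by (simp add: field_simps)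

lemma xi_of_odds:
  assumes "0 \<le> sv\<^sup>2 * p"
  shows "xi_of sv p / (1 - xi_of sv p) = sv\<^sup>2 * p" and "xi_of sv p \<in> {0..<1}"
proof -
  have "0 < sv\<^sup>2 * p + 1"
    using assms by simp
  then show "xi_of sv p / (1 - xi_of sv p) = sv\<^sup>2 * p" "xi_of sv p \<in> {0..<1}"
    using assms unfolding xi_of_def by (simp_all add: field_simps)
qed

lemma bij_betw_xi_of:
  assumes "0 < sv"
  shows "bij_betw (xi_of sv) {0..} {0..<1}"
  by (rule bij_betw_byWitness[where f' = "\<lambda>x. 1 / sv\<^sup>2 * (x / (1 - x))"])
    (use assms xi_of_prec xi_of_odds in auto)

lemma J_prec_strict_max:
  assumes "0 < sv" "0 < sZ" "0 < T" "0 < lam"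
  shows "is_strict_max_on (J_prec sv sZ T lam) {0..} (opt_prec sv sZ T lam)"
proof -
  have "opt_xi sv sZ T lam \<in> {0..<1}"
    using opt_xi_strict_max[OF assms] by (simp add: is_strict_max_on_def)
  then have "opt_prec sv sZ T lam \<in> {0..}" "xi_of sv (opt_prec sv sZ T lam) = opt_xi sv sZ T lam"
    unfolding opt_prec_def using assms(1) xi_of_prec by simp_all
  then show ?thesis
    using is_strict_max_on_bij_betw[OF bij_betw_xi_of[OF assms(1)]] opt_xi_strict_max[OF assms]
    unfolding J_prec_def by (metis (no_types))
qed

lemma odds_strict_mono:
  fixes x y :: real
  assumes "x < y" "y < 1"
  shows "x / (1 - x) < y / (1 - y)"
  using assms by (simp add: field_simps)

lemma opt_prec_strict_antimono:
  assumes "0 < sv" "0 < sZ" "0 < T" "0 < lam" "0 < sZ'" "0 < T'" "0 < lam'"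
    and "kappa sv sZ T lam < kappa sv sZ' T' lam'"
  shows "opt_prec sv sZ' T' lam' < opt_prec sv sZ T lam"
proof -
  have "opt_xi sv sZ' T' lam' < opt_xi sv sZ T lam" "opt_xi sv sZ T lam < 1"
    using opt_xi_strict_antimono[OF assms(1-4) assms(1,5-8)] opt_xi_strict_max[OF assms(1-4)]
    by (simp_all add: is_strict_max_on_def)
  then show ?thesis
    unfolding opt_prec_def using assms(1) by (intro mult_strict_left_mono odds_strict_mono) simp_all
qed

theorem proposition3:
  fixes sv sZ T lam :: real
  assumes "sv > 0" "sZ > 0" "T > 0" "lam > 0"
  shows "(\<exists>!xi. xi \<in> {0..<1} \<and>
            (\<forall>eta\<in>{0..<1}. value_xi sv sZ T lam eta \<le> value_xi sv sZ T lam xi))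
    \<and> {p. 0 \<le> p \<and> (\<forall>q. 0 \<le> q \<longrightarrow> J_prec sv sZ T lam q \<le> J_prec sv sZ T lam p)}
        = {opt_prec sv sZ T lam}
    \<and> (\<forall>sv' sZ' T' lam'. sv' > 0 \<longrightarrow> sZ' > 0 \<longrightarrow> T' > 0 \<longrightarrow> lam' > 0 \<longrightarrow>
         kappa sv sZ T lam < kappa sv' sZ' T' lam' \<longrightarrow>
           opt_xi sv' sZ' T' lam' < opt_xi sv sZ T lam
           \<and> (sv' = sv \<longrightarrow> opt_prec sv' sZ' T' lam' < opt_prec sv sZ T lam))"
proof (intro conjI allI impI)
  show "\<exists>!xi. xi \<in> {0..<1} \<and> (\<forall>eta\<in>{0..<1}. value_xi sv sZ T lam eta \<le> value_xi sv sZ T lam xi)"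
    using is_strict_max_on_ex1[OF opt_xi_strict_max[OF assms]] .
  show "{p. 0 \<le> p \<and> (\<forall>q. 0 \<le> q \<longrightarrow> J_prec sv sZ T lam q \<le> J_prec sv sZ T lam p)}
      = {opt_prec sv sZ T lam}"
    using is_strict_max_on_maximizers[OF J_prec_strict_max[OF assms]] by (simp add: atLeast_def)
  fix sv' sZ' T' lam' :: real
  assume pos': "sv' > 0" "sZ' > 0" "T' > 0" "lam' > 0"
    and less: "kappa sv sZ T lam < kappa sv' sZ' T' lam'"
  show "opt_xi sv' sZ' T' lam' < opt_xi sv sZ T lam"
    using opt_xi_strict_antimono[OF assms pos' less] .
  assume "sv' = sv"
  then show "opt_prec sv' sZ' T' lam' < opt_prec sv sZ T lam"
    using opt_prec_strict_antimono[OF assms pos'(2-4)] less by simp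
qed

end
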